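(* Let $m\in\mathbb{N}$ with $m\ge 2$. For all $l\in\mathbb{N}_0$, $t>0$, the function $c^t_{m,l}$ on $\mathbb{RP}^m\times\mathbb{RP}^m$ satisfies $|c^t_{m,l}| \le e^{-l(l+m-1)\frac t2}\,2^7(l+m-2)^{m+1}$, and $c^t_{m,0}=c^t_{m,1}=0$. For all $t>0$ and $[x],[y]\in\mathbb{RP}^m$, $$\Big(\sum_{l=0}^\infty c^t_{m,l}([x],[y])\Big)^2 = \sum_{n=0}^\infty d^t_{m,n}([x],[y]),\qquad \Big(\sum_{l=0}^\infty c^t_{m,l}([x],[y])\Big)^3 = \sum_{k=0}^\infty h^t_{m,k}([x],[y]).$$ For all $n,k\in\mathbb{N}_0$ and $t>0$, $$|d^t_{m,n}| \le e^{-(\frac{n^2}{2}+n(m-1))\frac t2}\,2^{14}(n+m-2)^{2m+3},\qquad |h^t_{m,k}| \le e^{-(\frac{k^2}{3}+k(m-1))\frac t2}\,2^{21}(k+m-2)^{3m+5}$$ on $\mathbb{RP}^m\times\mathbb{RP}^m$. Moreover $d^t_{m,n}=0$ for $n\in\{0,1,2,3\}$ and $h^t_{m,k}=0$ for $k\in\{0,1,2,3,4,5\}$, for all $t>0$.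
   Context: $\mathbb{RP}^m = \{[x]: x\in\mathbb{S}^m\}$, $[x]=\{x,-x\}$, $\mathbb{S}^m\subset\mathbb{R}^{m+1}$ the unit sphere. $C_l^{(m-1)/2}$ is the Gegenbauer polynomial of degree $l$ and parameter $(m-1)/2$. For $l\in\mathbb{N}_0$ and $t>0$, define $c^t_{m,l}([x],[y]) := 0$ if $l$ is odd or $l=0$, and for even $l>0$, $c^t_{m,l}([x],[y]) := e^{-l(l+m-1)\frac t2}\frac{2l+m-1}{m-1}C_l^{(m-1)/2}(\langle x,y\rangle)$ (unit representatives $x,y$). Further, for $n,k\in\mathbb{N}_0$, $d^t_{m,n} := \sum_{l=0}^n c^t_{m,l}c^t_{m,n-l}$ and $h^t_{m,k} := \sum_{n=0}^k d^t_{m,n}c^t_{m,k-n}$ (pointwise in $([x],[y])$). *)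

theory Defs
  imports "HOL-Analysis.Analysis"
begin

definition gegenbauer :: "real \<Rightarrow> nat \<Rightarrow> real \<Rightarrow> real" where
  "gegenbauer a n x =
     (\<Sum>k\<le>n div 2. (-1)^k * pochhammer a (n - k) / (fact k * fact (n - 2*k)) * (2*x)^(n - 2*k))"

text \<open>c^t_{m,l}([x],[y]) evaluated at unit representatives x, y.\<close>
definition cfun :: "nat \<Rightarrow> real \<Rightarrow> nat \<Rightarrow> 'a::real_inner \<Rightarrow> 'a \<Rightarrow> real" where
  "cfun m t l x y =
     (if odd l \<or> l = 0 then 0
      else exp (- (real l * (real l + real m - 1)) * t / 2)
           * (2 * real l + real m - 1) / (real m - 1)
           * gegenbauer ((real m - 1) / 2) l (inner x y))"

definition dfun :: "nat \<Rightarrow> real \<Rightarrow> nat \<Rightarrow> 'a::real_inner \<Rightarrow> 'a \<Rightarrow> real" where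
  "dfun m t n x y = (\<Sum>l\<le>n. cfun m t l x y * cfun m t (n - l) x y)"

definition hfun :: "nat \<Rightarrow> real \<Rightarrow> nat \<Rightarrow> 'a::real_inner \<Rightarrow> 'a \<Rightarrow> real" where
  "hfun m t k x y = (\<Sum>n\<le>k. dfun m t n x y * cfun m t (k - n) x y)"

end

theory Submission
  imports Defs "HOL-Real_Asymp.Real_Asymp"
begin

text \<open>For \<open>a > 0\<close> the Gegenbauer polynomial \<open>C = C_l^a\<close> is bounded on \<open>[-1, 1]\<close> by
  \<open>C(1) = (2a)_l / l! = binom(l + 2a - 1, l)\<close>: by the Gegenbauer differential equation the energy
  \<open>C^2 + (1 - x^2) C'^2 / (l (l + 2a))\<close> has derivative of the sign of \<open>x\<close>, so it is largest at
  \<open>x = \<plusminus>1\<close>. For \<open>a = (m - 1)/2\<close> this gives \<open>|c_l| \<le> 3 exp(-l(l + m - 1)t/2) (l + m - 2)^(m - 1)\<close>.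
  The Gaussian factor makes all series absolutely convergent, so \<open>d\<close> and \<open>h\<close> are Cauchy products,
  and their exponents come from completing the square:
  \<open>l(l + m - 1) + (n - l)(n - l + m - 1) = n^2/2 + n(m - 1) + (2l - n)^2/2\<close>, and likewise with
  remainder \<open>(3n - 2k)^2/6\<close> for \<open>h\<close>.\<close>

section \<open>Gegenbauer polynomials on [-1, 1]\<close>

definition gegenbauer_coeff :: "real \<Rightarrow> nat \<Rightarrow> nat \<Rightarrow> real" where
  "gegenbauer_coeff a n k = (-1)^k * pochhammer a (n - k) / (fact k * fact (n - 2*k))"

text \<open>Gegenbauer polynomials in the variable \<open>u = 2x\<close>, whose monomials carry no powers of 2,
  and their termwise derivatives.\<close>

definition geg :: "real \<Rightarrow> nat \<Rightarrow> real \<Rightarrow> real" where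
  "geg a n u = (\<Sum>k\<le>n div 2. gegenbauer_coeff a n k * u^(n - 2*k))"

definition geg' :: "real \<Rightarrow> nat \<Rightarrow> real \<Rightarrow> real" where
  "geg' a n u = (\<Sum>k\<le>n div 2. gegenbauer_coeff a n k * (real (n - 2*k) * u^(n - 2*k - 1)))"

definition geg'' :: "real \<Rightarrow> nat \<Rightarrow> real \<Rightarrow> real" where
  "geg'' a n u = (\<Sum>k\<le>n div 2. gegenbauer_coeff a n k *
                    (real (n - 2*k) * (real (n - 2*k - 1) * u^(n - 2*k - 1 - 1))))"

lemma gegenbauer_eq_geg: "gegenbauer a n x = geg a n (2*x)"
  unfolding gegenbauer_def geg_def gegenbauer_coeff_def by (rule sum.cong) auto

lemma has_real_derivative_geg: "(geg a n has_real_derivative geg' a n u) (at u)"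
  unfolding geg_def[abs_def] geg'_def
  by (intro DERIV_sum DERIV_cmult DERIV_pow[THEN DERIV_cong]) simp

lemma has_real_derivative_geg': "(geg' a n has_real_derivative geg'' a n u) (at u)"
  unfolding geg'_def[abs_def] geg''_def
  by (intro DERIV_sum DERIV_cmult DERIV_pow[THEN DERIV_cong]) simp

lemma geg_uminus: "geg a n (-u) = (-1)^n * geg a n u"
  unfolding geg_def sum_distrib_left
proof (rule sum.cong)
  fix k assume "k \<in> {..n div 2}"
  then have n: "n = (n - 2*k) + 2*k" by simp
  have "(-1::real)^n = (-1)^(n - 2*k)"
    by (subst n) (simp add: power_add power_mult)
  then show "gegenbauer_coeff a n k * (-u)^(n - 2*k) = (-1)^n * (gegenbauer_coeff a n k * u^(n - 2*k))"
    by (simp add: power_minus[of u])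
qed simp

lemma sum_atMost_shift_cancel:
  fixes A B :: "nat \<Rightarrow> 'a::comm_monoid_add"
  assumes "B 0 = 0" and "A q = 0" and "\<And>k. k < q \<Longrightarrow> A k + B (Suc k) = 0"
  shows "(\<Sum>k\<le>q. A k + B k) = 0"
proof (cases q)
  case 0
  then show ?thesis using assms by simp
next
  case (Suc p)
  have "(\<Sum>k\<le>Suc p. B k) = B 0 + (\<Sum>k\<le>p. B (Suc k))"
    by (rule sum.atMost_Suc_shift)
  then have "(\<Sum>k\<le>q. A k + B k) = (\<Sum>k\<le>p. A k + B (Suc k)) + (A q + B 0)"
    unfolding sum.distrib Suc by (simp add: ac_simps)
  also have "\<dots> = 0" using assms Suc by simp
  finally show ?thesis .
qed

lemma geg_ode_monomial:
  assumes "n = j + 2*k"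
  shows "(4 - u^2) * (c * (real j * (real (j - 1) * u^(j - 1 - 1))))
           - (2*a + 1) * u * (c * (real j * u^(j - 1))) + real n * (real n + 2*a) * (c * u^j)
         = 4 * (c * (real j * (real (j - 1) * u^(j - 2)))) + c * (4 * real k * (real n - real k + a)) * u^j"
proof -
  consider "j = 0" | "j = 1" | r where "j = Suc (Suc r)"
    by (metis One_nat_def not0_implies_Suc)
  then show ?thesis
    by cases (use assms in \<open>simp_all add: algebra_simps power2_eq_square\<close>)
qed

lemma gegenbauer_coeff_recurrence:
  assumes "2*k + 2 \<le> n"
  shows "4 * (gegenbauer_coeff a n k * (real (n - 2*k) * real (n - 2*k - 1)))
         + gegenbauer_coeff a n (Suc k) * (4 * real (Suc k) * (real n - real (Suc k) + a)) = 0"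
proof -
  define r where "r = n - 2*k - 2"
  have "n = r + 2*k + 2" using assms unfolding r_def by simp
  then have e: "n - 2*k = Suc (Suc r)" "n - 2*k - 1 = Suc r" "n - 2 * Suc k = r"
    "n - k = Suc (r + k + 1)" "n - Suc k = r + k + 1" "real n - real (Suc k) + a = a + real (r + k + 1)"
    by auto
  define X where "X = (-1)^k * pochhammer a (r + k + 1) / (fact k * fact r)"
  have fr: "(fact (Suc (Suc r)) :: real) = real (Suc (Suc r)) * real (Suc r) * fact r"
    by simp
  have "gegenbauer_coeff a n k = X * (a + real (r + k + 1)) / (real (Suc (Suc r)) * real (Suc r))"
    unfolding gegenbauer_coeff_def e X_def pochhammer_Suc fr by (simp add: field_simps)
  then have ck: "gegenbauer_coeff a n k * (real (Suc (Suc r)) * real (Suc r)) = X * (a + real (r + k + 1))"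
    by (simp del: of_nat_Suc)
  have fk: "(fact (Suc k) :: real) = real (Suc k) * fact k"
    by simp
  have "gegenbauer_coeff a n (Suc k) = - X / real (Suc k)"
    unfolding gegenbauer_coeff_def e X_def fk by (simp add: field_simps)
  then have ck1: "gegenbauer_coeff a n (Suc k) * real (Suc k) = - X"
    by (simp del: of_nat_Suc)
  have "4 * (gegenbauer_coeff a n k * (real (n - 2*k) * real (n - 2*k - 1)))
         + gegenbauer_coeff a n (Suc k) * (4 * real (Suc k) * (real n - real (Suc k) + a))
      = 4 * (gegenbauer_coeff a n k * (real (Suc (Suc r)) * real (Suc r)))
         + 4 * (a + real (r + k + 1)) * (gegenbauer_coeff a n (Suc k) * real (Suc k))"
    unfolding e(2) unfolding e(1,6) by (simp only: mult_ac)
  also have "\<dots> = 0" unfolding ck ck1 by simp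
  finally show ?thesis .
qed

lemma geg_ode: "(4 - u^2) * geg'' a n u - (2*a + 1) * u * geg' a n u + real n * (real n + 2*a) * geg a n u = 0"
proof -
  let ?A = "\<lambda>k. 4 * (gegenbauer_coeff a n k * (real (n - 2*k) * (real (n - 2*k - 1) * u^(n - 2*k - 2))))"
  let ?B = "\<lambda>k. gegenbauer_coeff a n k * (4 * real k * (real n - real k + a)) * u^(n - 2*k)"
  have "(4 - u^2) * geg'' a n u - (2*a + 1) * u * geg' a n u + real n * (real n + 2*a) * geg a n u
      = (\<Sum>k\<le>n div 2. ?A k + ?B k)"
    unfolding geg_def geg'_def geg''_def sum_distrib_left sum_subtractf[symmetric] sum.distrib[symmetric]
    by (intro sum.cong refl geg_ode_monomial) auto
  also have "\<dots> = 0"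
    \<comment> \<open>term \<open>k\<close> of the second-derivative part cancels term \<open>k + 1\<close> of the rest\<close>
  proof (rule sum_atMost_shift_cancel)
    have "n - 2 * (n div 2) \<le> 1" by presburger
    then show "?A (n div 2) = 0" by (auto simp: le_Suc_eq)
    fix k assume "k < n div 2"
    then have k: "2*k + 2 \<le> n" by linarith
    then have "n - 2 * Suc k = n - 2*k - 2" by simp
    then have "?A k + ?B (Suc k) = (4 * (gegenbauer_coeff a n k * (real (n - 2*k) * real (n - 2*k - 1)))
         + gegenbauer_coeff a n (Suc k) * (4 * real (Suc k) * (real n - real (Suc k) + a))) * u^(n - 2*k - 2)"
      by (simp add: algebra_simps)
    then show "?A k + ?B (Suc k) = 0"
      using gegenbauer_coeff_recurrence[OF k, of a] by simp
  qed simp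
  finally show ?thesis .
qed

lemma gegenbauer_coeff_shift:
  assumes "2*k \<le> n"
  shows "gegenbauer_coeff a (Suc n) k * real (Suc n - 2*k) = a * gegenbauer_coeff (a + 1) n k"
proof -
  define j where "j = n - 2*k"
  have e: "Suc n - 2*k = Suc j" "Suc n - k = Suc (n - k)" using assms unfolding j_def by auto
  have f: "(fact (Suc j) :: real) = real (Suc j) * fact j" by simp
  have "gegenbauer_coeff a (Suc n) k * real (Suc n - 2*k)
      = (-1)^k * (a * pochhammer (a + 1) (n - k)) / (fact k * (real (Suc j) * fact j)) * real (Suc j)"
    unfolding gegenbauer_coeff_def e f pochhammer_rec by simp
  also have "\<dots> = a * ((-1)^k * pochhammer (a + 1) (n - k) / (fact k * fact j))"
    by (simp add: field_simps del: of_nat_Suc)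
  finally show ?thesis unfolding gegenbauer_coeff_def j_def .
qed

lemma geg'_Suc: "geg' a (Suc n) u = a * geg (a + 1) n u"
proof -
  have "geg' a (Suc n) u
      = (\<Sum>k\<le>n div 2. gegenbauer_coeff a (Suc n) k * (real (Suc n - 2*k) * u^(Suc n - 2*k - 1)))"
    unfolding geg'_def
  proof (rule sum.mono_neutral_right)
    show "\<forall>i\<in>{..Suc n div 2} - {..n div 2}.
            gegenbauer_coeff a (Suc n) i * (real (Suc n - 2*i) * u^(Suc n - 2*i - 1)) = 0"
      by auto
  qed (auto simp: div_le_mono)
  also have "\<dots> = (\<Sum>k\<le>n div 2. a * (gegenbauer_coeff (a + 1) n k * u^(n - 2*k)))"
  proof (rule sum.cong[OF refl])
    fix k assume "k \<in> {..n div 2}"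
    then have k: "2*k \<le> n" by auto
    then have "Suc n - 2*k - 1 = n - 2*k" by auto
    then show "gegenbauer_coeff a (Suc n) k * (real (Suc n - 2*k) * u^(Suc n - 2*k - 1))
             = a * (gegenbauer_coeff (a + 1) n k * u^(n - 2*k))"
      using gegenbauer_coeff_shift[OF k, of a] by (simp add: mult.assoc[symmetric])
  qed
  finally show ?thesis unfolding geg_def sum_distrib_left .
qed

lemma geg_at_2:
  assumes "a > 0"
  shows "geg a n 2 = pochhammer (2*a) n / fact n"
  using assms
proof (induction n arbitrary: a)
  case 0
  then show ?case by (simp add: geg_def gegenbauer_coeff_def)
next
  case (Suc n)
  define N where "N = real (Suc n) * (2*a + 1 + real n)"
  have N: "N > 0" unfolding N_def using Suc.prems by simp
  \<comment> \<open>at \<open>u = 2\<close> the second-order term of the differential equation drops out\<close>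
  have "N * geg a (Suc n) 2 = (2*a + 1) * 2 * geg' a (Suc n) 2"
    using geg_ode[of 2 a "Suc n"] unfolding N_def by (simp add: algebra_simps)
  then have "geg a (Suc n) 2 = (2*a + 1) * 2 * geg' a (Suc n) 2 / N"
    using N by (simp add: field_simps)
  also have "geg' a (Suc n) 2 = a * (pochhammer (2*a + 2) n / fact n)"
    using Suc.IH[of "a + 1"] Suc.prems unfolding geg'_Suc by (simp add: algebra_simps)
  also have "(2*a + 1) * 2 * (a * (pochhammer (2*a + 2) n / fact n)) / N
      = (2*a + 1) * 2 * a * pochhammer (2*a + 2) n / (fact n * N)"
    by simp
  also have "\<dots> = 2*a * pochhammer (2*a + 1) n / fact (Suc n)"
  proof -
    have pos: "2*a + 1 + real n > 0" using Suc.prems by simp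
    have "pochhammer (2*a + 1) n * (2*a + 1 + real n) = (2*a + 1) * pochhammer (2*a + 2) n"
      using pochhammer_rec[of "2*a + 1" n] pochhammer_Suc[of "2*a + 1" n] by (simp add: add.assoc)
    then have p: "pochhammer (2*a + 1) n = (2*a + 1) * pochhammer (2*a + 2) n / (2*a + 1 + real n)"
      using pos by (simp add: field_simps)
    show ?thesis
      unfolding p N_def fact_Suc using pos by (simp add: field_simps del: of_nat_Suc)
  qed
  also have "\<dots> = pochhammer (2*a) (Suc n) / fact (Suc n)"
    by (simp add: pochhammer_rec)
  finally show ?case .
qed

definition geg_energy :: "real \<Rightarrow> nat \<Rightarrow> real \<Rightarrow> real" where
  "geg_energy a n w = (geg a n w)^2 + (4 - w^2) * (geg' a n w)^2 / (real n * (real n + 2*a))"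

lemma has_real_derivative_geg_energy:
  assumes N: "real n * (real n + 2*a) \<noteq> 0"
  shows "(geg_energy a n has_real_derivative
           4 * a * w * (geg' a n w)^2 / (real n * (real n + 2*a))) (at w)"
proof -
  define N where "N = real n * (real n + 2*a)"
  have N0: "N \<noteq> 0" using N unfolding N_def .
  have ode: "(4 - w^2) * geg'' a n w = (2*a + 1) * w * geg' a n w - N * geg a n w"
    using geg_ode[of w a n] unfolding N_def by (simp add: algebra_simps)
  have "(geg_energy a n has_real_derivative
         2 * geg' a n w * geg a n w + (2 * geg' a n w * ((4 - w^2) * geg'' a n w) - 2 * w * (geg' a n w)^2) / N) (at w)"
    unfolding geg_energy_def[abs_def] N_def[symmetric]
    by (rule derivative_eq_intros has_real_derivative_geg has_real_derivative_geg' refl | fact N0)+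
       (use N0 in \<open>simp add: field_simps power2_eq_square\<close>)
  moreover have "2 * geg' a n w * geg a n w + (2 * geg' a n w * ((4 - w^2) * geg'' a n w) - 2 * w * (geg' a n w)^2) / N
      = 4 * a * w * (geg' a n w)^2 / N"
    unfolding ode using N0 by (simp add: field_simps power2_eq_square)
  ultimately show ?thesis unfolding N_def by simp
qed

lemma geg_abs_le_geg_2:
  assumes a: "a > 0" and u: "\<bar>u\<bar> \<le> 2"
  shows "\<bar>geg a n u\<bar> \<le> geg a n 2"
proof (cases "n = 0")
  case True
  then show ?thesis by (simp add: geg_def gegenbauer_coeff_def)
next
  case False
  define N where "N = real n * (real n + 2*a)"
  have N: "N > 0" unfolding N_def using a False by simp
  let ?F = "geg_energy a n"
  have "real n * (real n + 2*a) \<noteq> 0" using N unfolding N_def by linarith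
  then have F': "(?F has_real_derivative 4 * a * w * (geg' a n w)^2 / N) (at w)" for w
    unfolding N_def by (rule has_real_derivative_geg_energy)
  have "u^2 \<le> 2^2" using abs_le_square_iff[of u 2] u by simp
  then have "(geg a n u)^2 \<le> ?F u"
    unfolding geg_energy_def using N N_def by simp
  also have "?F u \<le> (geg a n 2)^2"
  proof (cases "u \<ge> 0")
    case True
    have "?F u \<le> ?F 2"
      using u True a N
      by (intro DERIV_nonneg_imp_nondecreasing[of u 2 ?F]) (auto intro!: exI F')
    then show ?thesis unfolding geg_energy_def by simp
  next
    case False
    have "?F u \<le> ?F (-2)"
    proof (rule DERIV_nonpos_imp_nonincreasing[of "-2" u ?F])
      fix w assume "-2 \<le> w" "w \<le> u"
      then have "4 * a * w * (geg' a n w)^2 / N \<le> 0"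
        using N a False by (intro divide_nonpos_pos mult_nonpos_nonneg mult_nonneg_nonpos) auto
      then show "\<exists>y. (?F has_real_derivative y) (at w) \<and> y \<le> 0" using F' by blast
    qed (use u in simp)
    then show ?thesis unfolding geg_energy_def by (simp add: geg_uminus power_mult_distrib flip: power_mult)
  qed
  finally have "\<bar>geg a n u\<bar> \<le> \<bar>geg a n 2\<bar>" by (simp add: abs_le_square_iff)
  also have "\<bar>geg a n 2\<bar> = geg a n 2"
    using a by (simp add: geg_at_2 pochhammer_nonneg)
  finally show ?thesis .
qed

lemma gegenbauer_abs_le:
  assumes "a > 0" and "\<bar>x\<bar> \<le> 1"
  shows "\<bar>gegenbauer a n x\<bar> \<le> pochhammer (2*a) n / fact n"
  using geg_abs_le_geg_2[of a "2*x" n] assms by (simp add: gegenbauer_eq_geg geg_at_2)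

lemma gegenbauer_half_abs_le:
  assumes m: "m \<ge> 2" and x: "\<bar>x\<bar> \<le> 1"
  shows "\<bar>gegenbauer ((real m - 1) / 2) l x\<bar> \<le> (real l + real m - 2) ^ (m - 2)"
proof -
  have e: "2 * ((real m - 1) / 2) = real (l + m - 2) - real l + 1"
    using m by (simp add: of_nat_diff)
  have "\<bar>gegenbauer ((real m - 1) / 2) l x\<bar> \<le> pochhammer (real (l + m - 2) - real l + 1) l / fact l"
    using gegenbauer_abs_le[of "(real m - 1) / 2" x l, unfolded e] m x by simp
  also have "\<dots> = real (l + m - 2) gchoose l"
    by (simp only: gbinomial_pochhammer')
  also have "\<dots> = real ((l + m - 2) choose l)"
    by (simp add: binomial_gbinomial)
  also have "(l + m - 2) choose l = (l + m - 2) choose (m - 2)"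
    using m by (subst binomial_symmetric) (auto intro: arg_cong2[where f = binomial])
  also have "real ((l + m - 2) choose (m - 2)) \<le> real ((l + m - 2) ^ (m - 2))"
    by (subst of_nat_le_iff) (rule binomial_le_pow, simp)
  finally show ?thesis using m by (simp add: of_nat_diff)
qed

section \<open>Pointwise bounds\<close>

lemma cfun_eq_0: "l \<le> 1 \<Longrightarrow> cfun m t l x y = 0"
  unfolding cfun_def by (auto simp: le_Suc_eq)

lemma dfun_eq_0:
  assumes "n \<le> 3"
  shows "dfun m t n x y = 0"
  unfolding dfun_def
proof (intro sum.neutral ballI)
  fix l assume "l \<in> {..n}"
  then have "l \<le> 1 \<or> n - l \<le> 1" using assms by auto
  then show "cfun m t l x y * cfun m t (n - l) x y = 0" by (auto simp: cfun_eq_0)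
qed

lemma hfun_eq_0:
  assumes "k \<le> 5"
  shows "hfun m t k x y = 0"
  unfolding hfun_def
proof (intro sum.neutral ballI)
  fix n assume "n \<in> {..k}"
  then have "n \<le> 3 \<or> k - n \<le> 1" using assms by auto
  then show "dfun m t n x y * cfun m t (k - n) x y = 0" by (auto simp: cfun_eq_0 dfun_eq_0)
qed

lemma cfun_abs_le:
  fixes x y :: "'a::real_inner"
  assumes m: "m \<ge> 2" and "norm x = 1" "norm y = 1" and Q: "real l + real m - 2 \<le> Q"
  shows "\<bar>cfun m t l x y\<bar> \<le> exp (- (real l * (real l + real m - 1)) * t / 2) * (3 * Q ^ (m - 1))"
proof (cases "odd l \<or> l = 0")
  case True
  then show ?thesis unfolding cfun_def using m Q by simp
next
  case False
  then have l: "l \<ge> 2" by presburger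
  define E where "E = exp (- (real l * (real l + real m - 1)) * t / 2)"
  have "\<bar>inner x y\<bar> \<le> 1" using Cauchy_Schwarz_ineq2[of x y] assms by simp
  then have "\<bar>gegenbauer ((real m - 1) / 2) l (inner x y)\<bar> \<le> (real l + real m - 2) ^ (m - 2)"
    by (rule gegenbauer_half_abs_le[OF m])
  also have "\<dots> \<le> Q ^ (m - 2)"
    using m Q by (intro power_mono) auto
  finally have geg: "\<bar>gegenbauer ((real m - 1) / 2) l (inner x y)\<bar> \<le> Q ^ (m - 2)" .
  have "(2 * real l + real m - 1) / (real m - 1) \<le> 2 * real l + real m - 1"
    using m l by (simp add: divide_le_eq)
  then have factor: "(2 * real l + real m - 1) / (real m - 1) \<le> 3 * Q"
    using m l Q by simp
  have "\<bar>cfun m t l x y\<bar>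
      = E * ((2 * real l + real m - 1) / (real m - 1)) * \<bar>gegenbauer ((real m - 1) / 2) l (inner x y)\<bar>"
    unfolding cfun_def E_def using False m by (simp add: abs_mult)
  also have "\<dots> \<le> E * (3 * Q) * Q ^ (m - 2)"
    using m l Q by (intro mult_mono mult_left_mono factor geg) (auto simp: E_def)
  also have "\<dots> = E * (3 * Q ^ (m - 1))"
    using m by (simp add: numeral_2_eq_2 Suc_diff_Suc[symmetric] ac_simps)
  finally show ?thesis unfolding E_def .
qed

lemma exp_half_mult_le:
  fixes A B C t :: real
  assumes "C \<le> A + B" and "t \<ge> 0"
  shows "exp (- A * t / 2) * exp (- B * t / 2) \<le> exp (- C * t / 2)"
proof -
  have "C * t \<le> (A + B) * t" using assms by (intro mult_right_mono)
  then show ?thesis by (simp add: algebra_simps flip: exp_add)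
qed

lemma square_exponent_superadditive_2:
  fixes a b c :: real
  shows "(a + b)^2 / 2 + (a + b) * c \<le> a * (a + c) + b * (b + c)"
proof -
  have "a * (a + c) + b * (b + c) - ((a + b)^2 / 2 + (a + b) * c) = (a - b)^2 / 2"
    by (simp add: field_simps power2_eq_square)
  then show ?thesis by (smt (verit) zero_le_power2 divide_nonneg_pos)
qed

lemma square_exponent_superadditive_3:
  fixes a b c :: real
  shows "(a + b)^2 / 3 + (a + b) * c \<le> a^2 / 2 + a * c + b * (b + c)"
proof -
  have "a^2 / 2 + a * c + b * (b + c) - ((a + b)^2 / 3 + (a + b) * c) = (a - 2 * b)^2 / 6"
    by (simp add: field_simps power2_eq_square)
  then show ?thesis by (smt (verit) zero_le_power2 divide_nonneg_pos)
qed

lemma abs_convolution_le: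
  fixes f g :: "nat \<Rightarrow> real"
  assumes "\<And>l. l \<le> n \<Longrightarrow> \<bar>f l\<bar> * \<bar>g (n - l)\<bar> \<le> B"
  shows "\<bar>\<Sum>l\<le>n. f l * g (n - l)\<bar> \<le> (real n + 1) * B"
proof -
  have "\<bar>\<Sum>l\<le>n. f l * g (n - l)\<bar> \<le> (\<Sum>l\<le>n. \<bar>f l\<bar> * \<bar>g (n - l)\<bar>)"
    by (rule order_trans[OF sum_abs]) (simp add: abs_mult)
  also have "\<dots> \<le> (\<Sum>l\<le>n. B)"
    using assms by (intro sum_mono) simp
  finally show ?thesis by (simp add: ac_simps)
qed

lemma dfun_abs_le:
  fixes x y :: "'a::real_inner"
  assumes m: "m \<ge> 2" and "norm x = 1" "norm y = 1" and t: "t \<ge> 0"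
  shows "\<bar>dfun m t n x y\<bar> \<le> (real n + 1) *
           (exp (- (real n ^ 2 / 2 + real n * (real m - 1)) * t / 2) * (9 * (real n + real m - 2) ^ (2 * (m - 1))))"
  unfolding dfun_def
proof (rule abs_convolution_le)
  fix l assume l: "l \<le> n"
  define Q where "Q = real n + real m - 2"
  have Q: "real l + real m - 2 \<le> Q" "real (n - l) + real m - 2 \<le> Q" "0 \<le> Q"
    unfolding Q_def using l m by auto
  have "\<bar>cfun m t l x y\<bar> * \<bar>cfun m t (n - l) x y\<bar>
      \<le> (exp (- (real l * (real l + real m - 1)) * t / 2) * (3 * Q ^ (m - 1)))
        * (exp (- (real (n - l) * (real (n - l) + real m - 1)) * t / 2) * (3 * Q ^ (m - 1)))"
    using assms Q by (intro mult_mono cfun_abs_le) auto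
  also have "\<dots> = exp (- (real l * (real l + real m - 1)) * t / 2)
        * exp (- (real (n - l) * (real (n - l) + real m - 1)) * t / 2) * (9 * Q ^ (2 * (m - 1)))"
    by (simp add: mult_2 power_add)
  also have "\<dots> \<le> exp (- (real n ^ 2 / 2 + real n * (real m - 1)) * t / 2) * (9 * Q ^ (2 * (m - 1)))"
    using square_exponent_superadditive_2[of "real l" "real (n - l)" "real m - 1"] l t Q
    by (intro mult_right_mono exp_half_mult_le) (auto simp: of_nat_diff algebra_simps)
  finally show "\<bar>cfun m t l x y\<bar> * \<bar>cfun m t (n - l) x y\<bar>
      \<le> exp (- (real n ^ 2 / 2 + real n * (real m - 1)) * t / 2) * (9 * (real n + real m - 2) ^ (2 * (m - 1)))"
    unfolding Q_def .
qed

lemma cfun_abs_bound: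
  fixes x y :: "'a::real_inner"
  assumes m: "m \<ge> 2" and "norm x = 1" "norm y = 1"
  shows "\<bar>cfun m t l x y\<bar> \<le> exp (- (real l * (real l + real m - 1)) * t / 2) * 2^7 * (real l + real m - 2) ^ (m + 1)"
proof (cases "l \<le> 1")
  case True
  then show ?thesis using m by (simp add: cfun_eq_0)
next
  case False
  define E where "E = exp (- (real l * (real l + real m - 1)) * t / 2)"
  define Q where "Q = real l + real m - 2"
  have Q: "Q \<ge> 1" unfolding Q_def using False m by simp
  have "\<bar>cfun m t l x y\<bar> \<le> E * (3 * Q ^ (m - 1))"
    unfolding E_def by (rule cfun_abs_le[OF assms]) (simp add: Q_def)
  also have "\<dots> \<le> E * (2^7 * Q ^ (m + 1))"
    using Q by (intro mult_left_mono mult_mono power_increasing) (auto simp: E_def)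
  finally show ?thesis unfolding E_def Q_def by (simp add: ac_simps)
qed

lemma dfun_abs_bound:
  fixes x y :: "'a::real_inner"
  assumes m: "m \<ge> 2" and "norm x = 1" "norm y = 1" and "t \<ge> 0"
  shows "\<bar>dfun m t n x y\<bar> \<le> exp (- (real n ^ 2 / 2 + real n * (real m - 1)) * t / 2)
                               * 2^14 * (real n + real m - 2) ^ (2 * m + 3)"
proof (cases "n \<le> 3")
  case True
  then show ?thesis using m by (simp add: dfun_eq_0)
next
  case False
  define E where "E = exp (- (real n ^ 2 / 2 + real n * (real m - 1)) * t / 2)"
  define Q where "Q = real n + real m - 2"
  have Q: "Q \<ge> 4" "real n + 1 \<le> 2 * Q" unfolding Q_def using False m by auto
  have "\<bar>dfun m t n x y\<bar> \<le> (real n + 1) * (E * (9 * Q ^ (2 * (m - 1))))"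
    unfolding E_def Q_def using assms by (rule dfun_abs_le)
  also have "\<dots> \<le> (2 * Q) * (E * (9 * Q ^ (2 * (m - 1))))"
    using Q by (intro mult_right_mono) (auto simp: E_def)
  also have "\<dots> = 18 * E * Q ^ Suc (2 * (m - 1))"
    by simp
  also have "\<dots> \<le> 2^14 * E * Q ^ (2 * m + 3)"
    using Q by (intro mult_mono power_increasing) (auto simp: E_def)
  finally show ?thesis unfolding E_def Q_def by (simp add: ac_simps)
qed

lemma hfun_abs_le:
  fixes x y :: "'a::real_inner"
  assumes m: "m \<ge> 2" and "norm x = 1" "norm y = 1" and t: "t \<ge> 0"
  shows "\<bar>hfun m t k x y\<bar> \<le> (real k + 1) *
           (exp (- (real k ^ 2 / 3 + real k * (real m - 1)) * t / 2) * (3 * 2^14 * (real k + real m - 2) ^ (3 * m + 2)))"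
  unfolding hfun_def
proof (rule abs_convolution_le)
  fix n assume n: "n \<le> k"
  define Q where "Q = real k + real m - 2"
  have Q: "real n + real m - 2 \<le> Q" "real (k - n) + real m - 2 \<le> Q" "0 \<le> real n + real m - 2"
    unfolding Q_def using n m by auto
  have "\<bar>dfun m t n x y\<bar> * \<bar>cfun m t (k - n) x y\<bar>
      \<le> (exp (- (real n ^ 2 / 2 + real n * (real m - 1)) * t / 2) * 2^14 * Q ^ (2 * m + 3))
        * (exp (- (real (k - n) * (real (k - n) + real m - 1)) * t / 2) * (3 * Q ^ (m - 1)))"
    using assms Q
    by (intro mult_mono cfun_abs_le order_trans[OF dfun_abs_bound] mult_left_mono power_mono) auto
  also have "\<dots> = exp (- (real n ^ 2 / 2 + real n * (real m - 1)) * t / 2)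
        * exp (- (real (k - n) * (real (k - n) + real m - 1)) * t / 2) * (3 * 2^14 * Q ^ (3 * m + 2))"
    using m by (simp add: power_add[symmetric] ac_simps)
  also have "\<dots> \<le> exp (- (real k ^ 2 / 3 + real k * (real m - 1)) * t / 2) * (3 * 2^14 * Q ^ (3 * m + 2))"
    using square_exponent_superadditive_3[of "real n" "real (k - n)" "real m - 1"] n t Q
    by (intro mult_right_mono exp_half_mult_le) (auto simp: of_nat_diff algebra_simps)
  finally show "\<bar>dfun m t n x y\<bar> * \<bar>cfun m t (k - n) x y\<bar>
      \<le> exp (- (real k ^ 2 / 3 + real k * (real m - 1)) * t / 2) * (3 * 2^14 * (real k + real m - 2) ^ (3 * m + 2))"
    unfolding Q_def .
qed

lemma hfun_abs_bound:
  fixes x y :: "'a::real_inner"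
  assumes m: "m \<ge> 2" and "norm x = 1" "norm y = 1" and "t \<ge> 0"
  shows "\<bar>hfun m t k x y\<bar> \<le> exp (- (real k ^ 2 / 3 + real k * (real m - 1)) * t / 2)
                               * 2^21 * (real k + real m - 2) ^ (3 * m + 5)"
proof (cases "k \<le> 5")
  case True
  then show ?thesis using m by (simp add: hfun_eq_0)
next
  case False
  define E where "E = exp (- (real k ^ 2 / 3 + real k * (real m - 1)) * t / 2)"
  define Q where "Q = real k + real m - 2"
  have Q: "Q \<ge> 6" "real k + 1 \<le> 2 * Q" unfolding Q_def using False m by auto
  have "\<bar>hfun m t k x y\<bar> \<le> (real k + 1) * (E * (3 * 2^14 * Q ^ (3 * m + 2)))"
    unfolding E_def Q_def using assms by (rule hfun_abs_le)
  also have "\<dots> \<le> (2 * Q) * (E * (3 * 2^14 * Q ^ (3 * m + 2)))"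
    using Q by (intro mult_right_mono) (auto simp: E_def)
  also have "\<dots> = 6 * 2^14 * E * Q ^ Suc (3 * m + 2)"
    by simp
  also have "\<dots> \<le> 2^21 * E * Q ^ (3 * m + 5)"
    using Q by (intro mult_mono power_increasing) (auto simp: E_def)
  finally show ?thesis unfolding E_def Q_def by (simp add: ac_simps)
qed

section \<open>Absolute convergence and Cauchy products\<close>

lemma summable_poly_exp:
  fixes s b :: real
  assumes "s > 0"
  shows "summable (\<lambda>n. (real n + b) ^ p * exp (- real n * s))"
proof (rule summable_comparison_test_bigo)
  show "summable (\<lambda>n. norm (real n powr -2))"
    by (simp add: summable_real_powr_iff)
  show "(\<lambda>n. (real n + b) ^ p * exp (- real n * s)) \<in> O(\<lambda>n. real n powr -2)"
    using assms by real_asymp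
qed

lemma summable_norm_if_gaussian_bound:
  fixes f :: "nat \<Rightarrow> real"
  assumes t: "t > 0"
    and f: "\<And>n. \<bar>f n\<bar> \<le> exp (- \<alpha> n * t / 2) * C * (real n + b) ^ p"
    and \<alpha>: "\<And>n. real n \<le> \<alpha> n"
  shows "summable (\<lambda>n. norm (f n))"
proof (rule summable_comparison_test')
  show "summable (\<lambda>n. C * ((real n + b) ^ p * exp (- real n * (t / 2))))"
    using t by (intro summable_mult summable_poly_exp) simp
  fix n
  have f': "\<bar>f n\<bar> \<le> exp (- \<alpha> n * t / 2) * (C * (real n + b) ^ p)"
    using f[of n] by (simp add: mult.assoc)
  then have "0 \<le> exp (- \<alpha> n * t / 2) * (C * (real n + b) ^ p)"
    by (rule order_trans[OF abs_ge_zero])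
  then have "0 \<le> C * (real n + b) ^ p"
    by (simp add: zero_le_mult_iff)
  moreover have "exp (- \<alpha> n * t / 2) \<le> exp (- real n * (t / 2))"
    using mult_right_mono[OF \<alpha>[of n], of t] t by simp
  ultimately have "\<bar>f n\<bar> \<le> exp (- real n * (t / 2)) * (C * (real n + b) ^ p)"
    using f' by (meson mult_right_mono order_trans)
  then show "norm (norm (f n)) \<le> C * ((real n + b) ^ p * exp (- real n * (t / 2)))"
    by (simp add: ac_simps)
qed

lemma summable_norm_cfun:
  fixes x y :: "'a::real_inner"
  assumes m: "m \<ge> 2" and "norm x = 1" "norm y = 1" and t: "t > 0"
  shows "summable (\<lambda>l. norm (cfun m t l x y))"
proof (rule summable_norm_if_gaussian_bound[OF t])
  show "\<bar>cfun m t l x y\<bar>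
          \<le> exp (- (real l * (real l + real m - 1)) * t / 2) * 2^7 * (real l + (real m - 2)) ^ (m + 1)"
    for l using cfun_abs_bound[OF assms(1-3)] by (simp add: add_diff_eq)
  show "real l \<le> real l * (real l + real m - 1)" for l
    using m by (simp add: mult_le_cancel_left1)
qed

lemma summable_norm_dfun:
  fixes x y :: "'a::real_inner"
  assumes m: "m \<ge> 2" and "norm x = 1" "norm y = 1" and t: "t > 0"
  shows "summable (\<lambda>n. norm (dfun m t n x y))"
proof (rule summable_norm_if_gaussian_bound[OF t])
  show "\<bar>dfun m t n x y\<bar> \<le> exp (- (real n ^ 2 / 2 + real n * (real m - 1)) * t / 2)
                                * 2^14 * (real n + (real m - 2)) ^ (2 * m + 3)"
    for n using dfun_abs_bound[OF assms(1-3)] t by (simp add: add_diff_eq)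
  show "real n \<le> real n ^ 2 / 2 + real n * (real m - 1)" for n
  proof -
    have "real n \<le> real n * (real m - 1)"
      using m by (simp add: mult_le_cancel_left1)
    then show ?thesis using zero_le_power2[of "real n"] by linarith
  qed
qed

lemma dfun_sums:
  fixes x y :: "'a::real_inner"
  assumes "m \<ge> 2" "norm x = 1" "norm y = 1" "t > 0"
  shows "(\<lambda>n. dfun m t n x y) sums (\<Sum>l. cfun m t l x y) ^ 2"
  unfolding dfun_def power2_eq_square
  using Cauchy_product_sums[OF summable_norm_cfun[OF assms] summable_norm_cfun[OF assms]] .

lemma hfun_sums:
  fixes x y :: "'a::real_inner"
  assumes "m \<ge> 2" "norm x = 1" "norm y = 1" "t > 0"
  shows "(\<lambda>k. hfun m t k x y) sums (\<Sum>l. cfun m t l x y) ^ 3"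
proof -
  have "(\<lambda>k. hfun m t k x y) sums ((\<Sum>n. dfun m t n x y) * (\<Sum>l. cfun m t l x y))"
    unfolding hfun_def
    using Cauchy_product_sums[OF summable_norm_dfun[OF assms] summable_norm_cfun[OF assms]] .
  then show ?thesis
    using sums_unique[OF dfun_sums[OF assms]] by (simp add: power2_eq_square power3_eq_cube)
qed

theorem lemma3p5:
  fixes m :: nat
  assumes m2: "m \<ge> 2" and dim: "CARD('n::finite) = m + 1"
  shows
    "(\<forall>l t (x::real^'n) y. t > 0 \<longrightarrow> norm x = 1 \<longrightarrow> norm y = 1 \<longrightarrow>
        \<bar>cfun m t l x y\<bar> \<le> exp (- (real l * (real l + real m - 1)) * t / 2)
                               * 2^7 * (real l + real m - 2) ^ (m + 1))
   \<and> (\<forall>t (x::real^'n) y. cfun m t 0 x y = 0 \<and> cfun m t 1 x y = 0)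
   \<and> (\<forall>t (x::real^'n) y. t > 0 \<longrightarrow> norm x = 1 \<longrightarrow> norm y = 1 \<longrightarrow>
        summable (\<lambda>l. cfun m t l x y)
      \<and> (\<lambda>n. dfun m t n x y) sums ((\<Sum>l. cfun m t l x y) ^ 2)
      \<and> (\<lambda>k. hfun m t k x y) sums ((\<Sum>l. cfun m t l x y) ^ 3))
   \<and> (\<forall>n t (x::real^'n) y. t > 0 \<longrightarrow> norm x = 1 \<longrightarrow> norm y = 1 \<longrightarrow>
        \<bar>dfun m t n x y\<bar> \<le> exp (- (real n ^ 2 / 2 + real n * (real m - 1)) * t / 2)
                               * 2^14 * (real n + real m - 2) ^ (2 * m + 3))
   \<and> (\<forall>k t (x::real^'n) y. t > 0 \<longrightarrow> norm x = 1 \<longrightarrow> norm y = 1 \<longrightarrow>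
        \<bar>hfun m t k x y\<bar> \<le> exp (- (real k ^ 2 / 3 + real k * (real m - 1)) * t / 2)
                               * 2^21 * (real k + real m - 2) ^ (3 * m + 5))
   \<and> (\<forall>n t (x::real^'n) y. n \<le> 3 \<longrightarrow> t > 0 \<longrightarrow> dfun m t n x y = 0)
   \<and> (\<forall>k t (x::real^'n) y. k \<le> 5 \<longrightarrow> t > 0 \<longrightarrow> hfun m t k x y = 0)"
  by (intro conjI allI impI cfun_abs_bound dfun_abs_bound hfun_abs_bound dfun_sums hfun_sums
            summable_norm_cancel[OF summable_norm_cfun] m2)
     (auto simp: cfun_eq_0 dfun_eq_0 hfun_eq_0)

end
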